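(* Let $h:\mathbb{R}^d\to\mathbb{R}^d$ satisfy $\|h(w)-h(w')\|\le\kappa\|w-w'\|$ for all $w,w'$, for some $\kappa\in[0,1)$ and some norm $\|\cdot\|$, and let $w_*$ be its fixed point; set $g(w)=h(w)-w$. Let $\|\cdot\|_m$, $l_{cm}$, $u_{cm}$ be as in the context. Then for any iterate $w_{t_m}$ (indeed for any point $w_{t_m}\in\mathbb{R}^d$), $$\big\langle\nabla\|w_{t_m}-w_*\|_m^2,\;g(w_{t_m})\big\rangle\le-2\Big(1-\frac{u_{cm}}{l_{cm}}\kappa\Big)\|w_{t_m}-w_*\|_m^2.$$
   Context: Moreau envelope construction: fix a norm $\|\cdot\|_s$ on $\mathbb{R}^d$ such that $\frac12\|\cdot\|_s^2$ is $L$-smooth w.r.t. $\|\cdot\|_s$ (e.g. an $\ell_p$ norm with $p\ge2$), and a constant $\xi>0$. Define $M(w)=\inf_{u\in\mathbb{R}^d}\{\frac12\|u\|^2+\frac1{2\xi}\|w-u\|_s^2\}$. It is known that $M$ is differentiable ($\frac L\xi$-smooth w.r.t. $\|\cdot\|_s$) and that there is a norm $\|\cdot\|_m$ with $M(w)=\frac12\|w\|_m^2$; $\nabla\|w\|_m^2$ denotes the gradient of $w\mapsto\|w\|_m^2=2M(w)$. Let $l_{cs},u_{cs}>0$ satisfy $l_{cs}\|w\|_s\le\|w\|\le u_{cs}\|w\|_s$ for all $w$, and set $l_{cm}=\sqrt{1+\xi l_{cs}^2}$, $u_{cm}=\sqrt{1+\xi u_{cs}^2}$, so that $l_{cm}\|w\|_m\le\|w\|\le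 u_{cm}\|w\|_m$. $\langle\cdot,\cdot\rangle$ is the Euclidean inner product. *)

theory Defs
  imports "HOL-Analysis.Analysis"
begin

definition is_norm :: "('a::real_vector \<Rightarrow> real) \<Rightarrow> bool" where
  "is_norm nrm \<longleftrightarrow>
     (\<forall>x. 0 \<le> nrm x) \<and> (\<forall>x. nrm x = 0 \<longleftrightarrow> x = 0) \<and>
     (\<forall>c x. nrm (c *\<^sub>R x) = \<bar>c\<bar> * nrm x) \<and>
     (\<forall>x y. nrm (x + y) \<le> nrm x + nrm y)"

definition grad :: "('a::real_inner \<Rightarrow> real) \<Rightarrow> 'a \<Rightarrow> 'a" where
  "grad f x = (SOME D. (f has_derivative (\<lambda>v. D \<bullet> v)) (at x))"

definition L_smooth_wrt :: "('a::real_inner \<Rightarrow> real) \<Rightarrow> real \<Rightarrow> ('a \<Rightarrow> real) \<Rightarrow> bool" where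
  "L_smooth_wrt nrm L f \<longleftrightarrow>
     (\<forall>x. \<exists>D. (f has_derivative (\<lambda>v. D \<bullet> v)) (at x)) \<and>
     (\<forall>x y. f y \<le> f x + grad f x \<bullet> (y - x) + L / 2 * (nrm (y - x))\<^sup>2)"

definition moreau :: "('a::real_vector \<Rightarrow> real) \<Rightarrow> ('a \<Rightarrow> real) \<Rightarrow> real \<Rightarrow> 'a \<Rightarrow> real" where
  "moreau nrm nrms \<xi> w =
     Inf ((\<lambda>u. (nrm u)\<^sup>2 / 2 + (nrms (w - u))\<^sup>2 / (2 * \<xi>)) ` UNIV)"

definition norm_m :: "('a::real_vector \<Rightarrow> real) \<Rightarrow> ('a \<Rightarrow> real) \<Rightarrow> real \<Rightarrow> 'a \<Rightarrow> real" where
  "norm_m nrm nrms \<xi> w = sqrt (2 * moreau nrm nrms \<xi> w)"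

end

theory Submission
  imports Defs
begin

text \<open>
  The Moreau envelope \<open>M\<close> is midpoint convex (average two minimisers), and the
  \<open>L\<close>-smoothness of \<open>1/2 \<parallel>\<cdot>\<parallel>\<^sub>s\<^sup>2\<close>, used at a minimiser, bounds it above by a quadratic
  touching it at any given point; the two bounds pinch \<open>M\<close> into being differentiable.
  For the square of any norm \<open>N\<close> with gradient \<open>D\<close> at \<open>x\<close>, homogeneity gives
  \<open>\<langle>D, x\<rangle> = 2 N(x)\<^sup>2\<close> and the triangle inequality along the ray \<open>x + t y\<close> gives
  \<open>\<langle>D, y\<rangle> \<le> 2 N(x) N(y)\<close>. Taking \<open>N = \<parallel>\<cdot>\<parallel>\<^sub>m\<close>, \<open>x = w - w\<^sub>*\<close>, \<open>y = h(w) - w\<^sub>* = h(w) - h(w\<^sub>*)\<close>,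
  the contraction property and the comparison \<open>l\<^sub>c\<^sub>m \<parallel>\<cdot>\<parallel>\<^sub>m \<le> \<parallel>\<cdot>\<parallel> \<le> u\<^sub>c\<^sub>m \<parallel>\<cdot>\<parallel>\<^sub>m\<close> give
  \<open>N(y) \<le> (u\<^sub>c\<^sub>m / l\<^sub>c\<^sub>m) \<kappa> N(x)\<close>, whence the claim.
\<close>

lemma is_normD:
  assumes "is_norm n"
  shows is_norm_nonneg: "0 \<le> n x"
    and is_norm_eq_0_iff: "n x = 0 \<longleftrightarrow> x = 0"
    and is_norm_scaleR: "n (c *\<^sub>R x) = \<bar>c\<bar> * n x"
    and is_norm_triangle: "n (x + y) \<le> n x + n y"
  using assms unfolding is_norm_def by auto

lemma is_norm_0: "is_norm n \<Longrightarrow> n 0 = 0"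
  by (simp add: is_norm_eq_0_iff)

lemma is_norm_diff_le: "is_norm n \<Longrightarrow> n x - n y \<le> n (x - y)"
  using is_norm_triangle[of n "x - y" y] by simp

lemma is_norm_sum_le:
  assumes "is_norm n"
  shows "n (\<Sum>i\<in>S. f i) \<le> (\<Sum>i\<in>S. n (f i))"
proof (induction S rule: infinite_finite_induct)
  case (insert a S)
  then show ?case using is_norm_triangle[OF assms, of "f a" "sum f S"] by simp
qed (simp_all add: is_norm_0[OF assms])

lemma is_norm_le_norm:
  fixes n :: "'a::euclidean_space \<Rightarrow> real"
  assumes "is_norm n"
  obtains B where "B > 0" "\<And>x. n x \<le> B * norm x"
proof -
  define B where "B = 1 + (\<Sum>b\<in>Basis. n b)"
  have "(\<Sum>b\<in>Basis. n b) \<ge> 0" by (rule sum_nonneg) (simp add: is_norm_nonneg[OF assms])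
  then have "B > 0" unfolding B_def by simp
  moreover have "n x \<le> B * norm x" for x
  proof -
    have "n x = n (\<Sum>b\<in>Basis. (x \<bullet> b) *\<^sub>R b)" by (simp add: euclidean_representation)
    also have "\<dots> \<le> (\<Sum>b\<in>Basis. n ((x \<bullet> b) *\<^sub>R b))" by (rule is_norm_sum_le[OF assms])
    also have "\<dots> = (\<Sum>b\<in>Basis. \<bar>x \<bullet> b\<bar> * n b)" by (simp add: is_norm_scaleR[OF assms])
    also have "\<dots> \<le> (\<Sum>b\<in>Basis. norm x * n b)"
      by (intro sum_mono mult_right_mono) (auto simp: Basis_le_norm is_norm_nonneg[OF assms])
    also have "\<dots> \<le> B * norm x" unfolding B_def by (simp add: sum_distrib_left algebra_simps)
    finally show ?thesis .
  qed
  ultimately show thesis by (rule that)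
qed

lemma continuous_on_is_norm:
  fixes n :: "'a::euclidean_space \<Rightarrow> real"
  assumes "is_norm n"
  shows "continuous_on S n"
proof -
  obtain B where B: "B > 0" "\<And>x. n x \<le> B * norm x" using is_norm_le_norm[OF assms] by blast
  have "B-lipschitz_on S n"
  proof (rule lipschitz_onI)
    fix x y
    have "n x - n y \<le> B * norm (x - y)" "n y - n x \<le> B * norm (x - y)"
      using is_norm_diff_le[OF assms, of x y] is_norm_diff_le[OF assms, of y x] B(2)[of "x - y"]
        B(2)[of "y - x"] by (auto simp: norm_minus_commute)
    then show "dist (n x) (n y) \<le> B * dist x y" by (simp add: dist_real_def dist_norm)
  qed (use B in simp)
  then show ?thesis by (rule lipschitz_on_continuous_on)
qed

lemma is_norm_ge_norm:
  fixes n :: "'a::euclidean_space \<Rightarrow> real"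
  assumes "is_norm n"
  obtains c where "c > 0" "\<And>x. c * norm x \<le> n x"
proof -
  obtain b :: 'a where "b \<in> Basis" using nonempty_Basis by blast
  then have "sphere 0 1 \<noteq> ({} :: 'a set)" by (auto intro!: exI[of _ b])
  then obtain x0 :: 'a where x0: "x0 \<in> sphere 0 1" "\<And>y. y \<in> sphere 0 1 \<Longrightarrow> n x0 \<le> n y"
    using continuous_attains_inf[OF compact_sphere _ continuous_on_is_norm[OF assms]] by blast
  have "n x0 > 0"
    using x0(1) is_norm_eq_0_iff[OF assms, of x0] is_norm_nonneg[OF assms, of x0] by auto
  moreover have "n x0 * norm x \<le> n x" for x
  proof (cases "x = 0")
    case False
    then have "n x0 \<le> n ((1 / norm x) *\<^sub>R x)" by (intro x0(2)) simp
    also have "\<dots> = n x / norm x" by (simp add: is_norm_scaleR[OF assms])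
    finally show ?thesis using False by (simp add: field_simps)
  qed (simp add: is_norm_0[OF assms])
  ultimately show thesis by (rule that)
qed

lemma is_norm_midpoint_power2_le:
  assumes "is_norm n"
  shows "(n ((1/2) *\<^sub>R (x + y)))\<^sup>2 \<le> ((n x)\<^sup>2 + (n y)\<^sup>2) / 2"
proof -
  have "n ((1/2) *\<^sub>R (x + y)) \<le> (n x + n y) / 2"
    using is_norm_triangle[OF assms, of x y] by (simp add: is_norm_scaleR[OF assms])
  then have "(n ((1/2) *\<^sub>R (x + y)))\<^sup>2 \<le> ((n x + n y) / 2)\<^sup>2"
    by (rule power_mono) (simp add: is_norm_nonneg[OF assms])
  also have "\<dots> \<le> ((n x)\<^sup>2 + (n y)\<^sup>2) / 2"
    using sum_squares_ge_zero[of "n x - n y" 0] by (simp add: power2_eq_square field_simps)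
  finally show ?thesis .
qed

lemma grad_eqI:
  fixes f :: "'a::real_inner \<Rightarrow> real"
  assumes "(f has_derivative (\<lambda>v. D \<bullet> v)) (at x)"
  shows "grad f x = D"
proof -
  have "(f has_derivative (\<lambda>v. grad f x \<bullet> v)) (at x)"
    unfolding grad_def by (rule someI[of _ D]) (rule assms)
  then have "(\<lambda>v. grad f x \<bullet> v) = (\<lambda>v. D \<bullet> v)" using assms by (rule has_derivative_unique)
  then have "(grad f x - D) \<bullet> (grad f x - D) = 0" by (metis inner_diff_left diff_self)
  then show ?thesis by simp
qed

lemma has_real_derivative_along_line:
  fixes f :: "'a::real_inner \<Rightarrow> real"
  assumes "(f has_derivative (\<lambda>v. D \<bullet> v)) (at x)"
  shows "((\<lambda>t. f (x + t *\<^sub>R y)) has_real_derivative D \<bullet> y) (at 0)"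
proof -
  have "((\<lambda>t. x + t *\<^sub>R y) has_derivative (\<lambda>t. t *\<^sub>R y)) (at 0)"
    using has_derivative_add[OF has_derivative_const[of x]
        has_derivative_scaleR_left[OF has_derivative_ident]]
    by simp
  moreover have "(f has_derivative (\<lambda>v. D \<bullet> v)) (at (x + 0 *\<^sub>R y))"
    using assms by simp
  ultimately have "((\<lambda>t. f (x + t *\<^sub>R y)) has_derivative (\<lambda>t. D \<bullet> (t *\<^sub>R y))) (at 0)"
    by (rule has_derivative_compose)
  moreover have "(\<lambda>t. D \<bullet> (t *\<^sub>R y)) = (*) (D \<bullet> y)"
    by (simp add: fun_eq_iff)
  ultimately show ?thesis
    by (simp only: has_field_derivative_def)
qed

lemma has_derivative_of_quadratic_remainder:
  fixes f :: "'a::real_inner \<Rightarrow> real"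
  assumes "\<And>v. \<bar>f (x + v) - f x - D \<bullet> v\<bar> \<le> C * (norm v)\<^sup>2"
  shows "(f has_derivative (\<lambda>v. D \<bullet> v)) (at x)"
  unfolding has_derivative_at
proof
  show "bounded_linear ((\<bullet>) D)" by (rule bounded_linear_inner_right)
  have bound: "norm (norm (f (x + v) - f x - D \<bullet> v) / norm v) \<le> C * norm v" for v
  proof (cases "v = 0")
    case False
    have "\<bar>f (x + v) - f x - D \<bullet> v\<bar> \<le> C * norm v * norm v"
      using assms[of v] by (simp add: power2_eq_square mult.assoc)
    then show ?thesis using False by (simp add: pos_divide_le_eq)
  qed simp
  have "((\<lambda>v. C * norm v) \<longlongrightarrow> 0) (at 0)"
    using tendsto_mult_right_zero[OF tendsto_norm_zero[OF tendsto_ident_at]] .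
  then show "(\<lambda>v. norm (f (x + v) - f x - D \<bullet> v) / norm v) \<midarrow>0\<rightarrow> 0"
    by (rule Lim_null_comparison[OF always_eventually[OF allI[OF bound]]])
qed

text \<open>Midpoint convexity turns the upper bound at \<open>x - v\<close> into a matching lower bound at \<open>x + v\<close>.\<close>

lemma has_derivative_of_midpoint_convex_quadratic_upper:
  fixes f :: "'a::real_inner \<Rightarrow> real"
  assumes midpoint: "\<And>v. 2 * f x \<le> f (x + v) + f (x - v)"
    and upper: "\<And>v. f (x + v) \<le> f x + g \<bullet> v + C * (norm v)\<^sup>2"
  shows "(f has_derivative (\<lambda>v. g \<bullet> v)) (at x)"
proof (rule has_derivative_of_quadratic_remainder)
  fix v
  have "f (x - v) \<le> f x - g \<bullet> v + C * (norm v)\<^sup>2" using upper[of "- v"] by simp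
  then show "\<bar>f (x + v) - f x - g \<bullet> v\<bar> \<le> C * (norm v)\<^sup>2"
    using upper[of v] midpoint[of v] unfolding abs_le_iff by linarith
qed

text \<open>Along the ray \<open>x + t y\<close>, \<open>(N x + t N y)\<^sup>2\<close> dominates \<open>(N (x + t y))\<^sup>2\<close> for \<open>t \<ge> 0\<close>
  and agrees with it at \<open>t = 0\<close>, so its derivative there is the larger one.\<close>

lemma has_derivative_power2_norm_inner_le:
  fixes N :: "'a::real_inner \<Rightarrow> real"
  assumes N: "is_norm N" and D: "((\<lambda>v. (N v)\<^sup>2) has_derivative (\<lambda>v. D \<bullet> v)) (at x)"
  shows "D \<bullet> y \<le> 2 * N x * N y"
proof (rule ccontr)
  define g where "g = (\<lambda>t. (N (x + t *\<^sub>R y))\<^sup>2 - (N x + t * N y)\<^sup>2)"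
  have "((\<lambda>t. (N x + t * N y)\<^sup>2) has_real_derivative 2 * N x * N y) (at 0)"
    by (intro derivative_eq_intros) auto
  then have "(g has_real_derivative D \<bullet> y - 2 * N x * N y) (at 0)"
    unfolding g_def by (rule DERIV_diff[OF has_real_derivative_along_line[OF D]])
  moreover assume "\<not> D \<bullet> y \<le> 2 * N x * N y"
  then have "0 < D \<bullet> y - 2 * N x * N y" by simp
  ultimately have "\<exists>d>0. \<forall>t>0. t < d \<longrightarrow> g 0 < g (0 + t)" by (rule DERIV_pos_inc_right)
  then obtain d where "d > 0" and d: "\<forall>t>0. t < d \<longrightarrow> g 0 < g t" by auto
  then have "g 0 < g (d / 2)" using d[rule_format, of "d / 2"] by simp
  moreover have "g (d / 2) \<le> 0"
  proof -
    have "N (x + (d / 2) *\<^sub>R y) \<le> N x + (d / 2) * N y"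
      using is_norm_triangle[OF N, of x "(d / 2) *\<^sub>R y"] \<open>d > 0\<close>
      by (simp add: is_norm_scaleR[OF N])
    then show ?thesis unfolding g_def by (simp add: power_mono is_norm_nonneg[OF N])
  qed
  ultimately show False by (simp add: g_def)
qed

lemma has_derivative_power2_norm_inner_self:
  fixes N :: "'a::real_inner \<Rightarrow> real"
  assumes N: "is_norm N" and D: "((\<lambda>v. (N v)\<^sup>2) has_derivative (\<lambda>v. D \<bullet> v)) (at x)"
  shows "D \<bullet> x = 2 * (N x)\<^sup>2"
proof -
  have "(N (x + t *\<^sub>R x))\<^sup>2 = (1 + t)\<^sup>2 * (N x)\<^sup>2" for t
    using is_norm_scaleR[OF N, of "1 + t" x] by (simp add: algebra_simps power_mult_distrib)
  then have "((\<lambda>t. (1 + t)\<^sup>2 * (N x)\<^sup>2) has_real_derivative D \<bullet> x) (at 0)"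
    using has_real_derivative_along_line[OF D, of x] by simp
  moreover have "((\<lambda>t. (1 + t)\<^sup>2 * (N x)\<^sup>2) has_real_derivative 2 * (N x)\<^sup>2) (at 0)"
    by (intro derivative_eq_intros) auto
  ultimately show ?thesis by (rule DERIV_unique)
qed

lemma mult_add_mult_le_sqrt_sum_squares:
  fixes a b c d :: real
  shows "a * b + c * d \<le> sqrt (a\<^sup>2 + c\<^sup>2) * sqrt (b\<^sup>2 + d\<^sup>2)"
proof -
  have "(a * b + c * d)\<^sup>2 \<le> (a\<^sup>2 + c\<^sup>2) * (b\<^sup>2 + d\<^sup>2)"
    using sum_squares_ge_zero[of "a * d - c * b" 0] by (simp add: power2_eq_square algebra_simps)
  then show ?thesis by (simp add: real_le_rsqrt flip: real_sqrt_mult)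
qed

locale moreau_envelope =
  fixes nrm nrms :: "'a::euclidean_space \<Rightarrow> real" and \<xi> :: real
  assumes nrm: "is_norm nrm" and nrms: "is_norm nrms" and xi: "\<xi> > 0"
begin

definition objective :: "'a \<Rightarrow> 'a \<Rightarrow> real" where
  "objective w u = (nrm u)\<^sup>2 / 2 + (nrms (w - u))\<^sup>2 / (2 * \<xi>)"

abbreviation M :: "'a \<Rightarrow> real" where "M \<equiv> moreau nrm nrms \<xi>"

abbreviation N :: "'a \<Rightarrow> real" where "N \<equiv> norm_m nrm nrms \<xi>"

lemma objective_nonneg: "0 \<le> objective w u"
  unfolding objective_def using xi by simp

lemma two_objective_eq: "2 * objective w u = (nrm u)\<^sup>2 + (nrms (w - u) / sqrt \<xi>)\<^sup>2"
  unfolding objective_def using xi by (simp add: power_divide)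

lemma moreau_eq_Inf: "M w = Inf (range (objective w))"
  unfolding moreau_def objective_def by simp

lemma moreau_le: "M w \<le> objective w u"
  unfolding moreau_eq_Inf
  by (rule cInf_lower) (auto intro: bdd_belowI[of _ 0] simp: objective_nonneg)

lemma moreau_greatest: "(\<And>u. c \<le> objective w u) \<Longrightarrow> c \<le> M w"
  unfolding moreau_eq_Inf by (rule cInf_greatest) auto

lemma moreau_nonneg: "0 \<le> M w"
  by (rule moreau_greatest) (rule objective_nonneg)

lemma norm_m_nonneg: "0 \<le> N w"
  unfolding norm_m_def using moreau_nonneg[of w] by simp

lemma power2_norm_m: "(N w)\<^sup>2 = 2 * M w"
  unfolding norm_m_def using moreau_nonneg[of w] by simp

lemma continuous_on_objective: "continuous_on S (objective w)"
  unfolding objective_def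
  by (intro continuous_intros continuous_on_compose2[OF continuous_on_is_norm[OF nrm, of UNIV]]
        continuous_on_compose2[OF continuous_on_is_norm[OF nrms, of UNIV]]) (use xi in auto)

text \<open>Coercivity: outside a large ball the objective exceeds its value at \<open>0\<close>.\<close>

lemma moreau_attained:
  obtains u where "M w = objective w u"
proof -
  obtain c where c: "c > 0" "\<And>x. c * norm x \<le> nrm x" using is_norm_ge_norm[OF nrm] by blast
  define R where "R = sqrt (2 * objective w 0) / c"
  have "R \<ge> 0" unfolding R_def using c objective_nonneg by simp
  then have "cball 0 R \<noteq> {}" by simp
  then obtain u0 where u0: "\<And>u. u \<in> cball 0 R \<Longrightarrow> objective w u0 \<le> objective w u"
    using continuous_attains_inf[OF compact_cball _ continuous_on_objective] by blast
  have "objective w u0 \<le> objective w u" for u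
  proof (cases "u \<in> cball 0 R")
    case False
    then have "c * R < c * norm u" using c(1) by simp
    also have "\<dots> \<le> nrm u" by (rule c(2))
    finally have "c * R < nrm u" .
    then have "sqrt (2 * objective w 0) < nrm u" unfolding R_def using c by simp
    then have "(sqrt (2 * objective w 0))\<^sup>2 < (nrm u)\<^sup>2"
      by (rule power_strict_mono) (simp_all add: objective_nonneg)
    then have "2 * objective w 0 < (nrm u)\<^sup>2" using objective_nonneg[of w 0] by simp
    then have "objective w 0 < (nrm u)\<^sup>2 / 2" by simp
    also have "\<dots> \<le> objective w u" unfolding objective_def using xi by simp
    finally have "objective w 0 < objective w u" .
    moreover have "objective w u0 \<le> objective w 0" using \<open>R \<ge> 0\<close> by (intro u0) simp
    ultimately show ?thesis by simp
  qed (rule u0)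
  then have "M w = objective w u0" by (intro antisym moreau_le moreau_greatest)
  then show thesis by (rule that)
qed

lemma moreau_scaleR: "M (c *\<^sub>R w) = c\<^sup>2 * M w"
proof -
  have objective_scaleR: "objective (c *\<^sub>R w) (c *\<^sub>R u) = c\<^sup>2 * objective w u" for u
  proof -
    have "nrms (c *\<^sub>R w - c *\<^sub>R u) = \<bar>c\<bar> * nrms (w - u)"
      by (simp add: is_norm_scaleR[OF nrms] flip: scaleR_diff_right)
    then show ?thesis
      unfolding objective_def by (simp add: is_norm_scaleR[OF nrm] power_mult_distrib field_simps)
  qed
  obtain u0 where u0: "M w = objective w u0" using moreau_attained .
  have le: "M (c *\<^sub>R w) \<le> c\<^sup>2 * M w"
    using moreau_le[of "c *\<^sub>R w" "c *\<^sub>R u0"] objective_scaleR u0 by simp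
  show ?thesis
  proof (cases "c = 0")
    case True
    then show ?thesis using le moreau_nonneg[of "c *\<^sub>R w"] by simp
  next
    case False
    obtain u1 where u1: "M (c *\<^sub>R w) = objective (c *\<^sub>R w) u1" using moreau_attained .
    have "c\<^sup>2 * M w \<le> c\<^sup>2 * objective w ((1 / c) *\<^sub>R u1)"
      by (intro mult_left_mono moreau_le) simp
    also have "\<dots> = M (c *\<^sub>R w)" using objective_scaleR[of "(1 / c) *\<^sub>R u1"] False u1 by simp
    finally show ?thesis using le by simp
  qed
qed

lemma moreau_midpoint_convex: "2 * M x \<le> M (x + v) + M (x - v)"
proof -
  obtain u1 where u1: "M (x + v) = objective (x + v) u1" using moreau_attained .
  obtain u2 where u2: "M (x - v) = objective (x - v) u2" using moreau_attained .
  have "(1/2) *\<^sub>R x + (1/2) *\<^sub>R x = x" by (simp flip: scaleR_add_left)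
  then have "x - (1/2) *\<^sub>R (u1 + u2) = (1/2) *\<^sub>R ((x + v - u1) + (x - v - u2))"
    by (simp add: algebra_simps)
  then have "M x \<le> (nrm ((1/2) *\<^sub>R (u1 + u2)))\<^sup>2 / 2
      + (nrms ((1/2) *\<^sub>R ((x + v - u1) + (x - v - u2))))\<^sup>2 / (2 * \<xi>)"
    using moreau_le[of x "(1/2) *\<^sub>R (u1 + u2)"] by (simp add: objective_def)
  also have "\<dots> \<le> ((nrm u1)\<^sup>2 + (nrm u2)\<^sup>2) / 2 / 2
      + ((nrms (x + v - u1))\<^sup>2 + (nrms (x - v - u2))\<^sup>2) / 2 / (2 * \<xi>)"
    using is_norm_midpoint_power2_le[OF nrm, of u1 u2]
      is_norm_midpoint_power2_le[OF nrms, of "x + v - u1" "x - v - u2"] xi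
    by (intro add_mono divide_right_mono) auto
  also have "\<dots> = (M (x + v) + M (x - v)) / 2"
    unfolding u1 u2 objective_def using xi by (simp add: field_simps)
  finally show ?thesis by simp
qed

lemma norm_m_scaleR: "N (c *\<^sub>R w) = \<bar>c\<bar> * N w"
  unfolding norm_m_def moreau_scaleR by (simp add: real_sqrt_mult)

lemma norm_m_eq_objective:
  assumes "M w = objective w u"
  shows "N w = sqrt ((nrm u)\<^sup>2 + (nrms (w - u) / sqrt \<xi>)\<^sup>2)"
  unfolding norm_m_def assms two_objective_eq ..

lemma norm_m_triangle: "N (x + y) \<le> N x + N y"
proof -
  obtain u1 where u1: "M x = objective x u1" using moreau_attained .
  obtain u2 where u2: "M y = objective y u2" using moreau_attained .
  define p q where "p = nrm u1" and "q = nrms (x - u1) / sqrt \<xi>"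
  define r s where "r = nrm u2" and "s = nrms (y - u2) / sqrt \<xi>"
  have "nrms (x + y - (u1 + u2)) \<le> nrms (x - u1) + nrms (y - u2)"
    using is_norm_triangle[OF nrms, of "x - u1" "y - u2"] by (simp add: algebra_simps)
  then have "nrms (x + y - (u1 + u2)) / sqrt \<xi> \<le> q + s"
    unfolding q_def s_def add_divide_distrib[symmetric] using xi
    by (intro divide_right_mono) simp_all
  moreover have "nrm (u1 + u2) \<le> p + r" unfolding p_def r_def by (rule is_norm_triangle[OF nrm])
  ultimately have "2 * objective (x + y) (u1 + u2) \<le> (p + r)\<^sup>2 + (q + s)\<^sup>2"
    unfolding two_objective_eq using xi
    by (intro add_mono power_mono) (auto simp: is_norm_nonneg[OF nrm] is_norm_nonneg[OF nrms])
  then have "N (x + y) \<le> sqrt ((p + r)\<^sup>2 + (q + s)\<^sup>2)"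
    unfolding norm_m_def using moreau_le[of "x + y" "u1 + u2"] by simp
  also have "\<dots> \<le> N x + N y"
    unfolding norm_m_eq_objective[OF u1] norm_m_eq_objective[OF u2] p_def q_def r_def s_def
    by (rule real_sqrt_sum_squares_triangle_ineq)
  finally show ?thesis .
qed

lemma norm_m_eq_0_iff: "N w = 0 \<longleftrightarrow> w = 0"
proof
  obtain u where u: "M w = objective w u" using moreau_attained .
  assume "N w = 0"
  then have "(nrm u)\<^sup>2 + (nrms (w - u))\<^sup>2 / \<xi> = 0"
    using norm_m_eq_objective[OF u] xi by (simp add: power_divide)
  then show "w = 0"
    using xi by (simp add: add_nonneg_eq_0_iff is_norm_eq_0_iff[OF nrm] is_norm_eq_0_iff[OF nrms])
next
  assume "w = 0"
  then show "N w = 0" using norm_m_scaleR[of 0 w] by simp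
qed

lemma is_norm_norm_m: "is_norm N"
  unfolding is_norm_def using norm_m_nonneg norm_m_eq_0_iff norm_m_scaleR norm_m_triangle by blast

lemma norm_le_norm_m:
  assumes "\<And>v. nrm v \<le> c * nrms v"
  shows "nrm w \<le> sqrt (1 + \<xi> * c\<^sup>2) * N w"
proof -
  obtain u where u: "M w = objective w u" using moreau_attained .
  define q where "q = nrms (w - u) / sqrt \<xi>"
  have "nrm w \<le> nrm u + nrm (w - u)" using is_norm_triangle[OF nrm, of u "w - u"] by simp
  also have "\<dots> \<le> nrm u * 1 + q * (c * sqrt \<xi>)"
    unfolding q_def using assms[of "w - u"] xi by (simp add: ac_simps)
  also have "\<dots> \<le> sqrt ((nrm u)\<^sup>2 + q\<^sup>2) * sqrt (1\<^sup>2 + (c * sqrt \<xi>)\<^sup>2)"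
    by (rule mult_add_mult_le_sqrt_sum_squares)
  also have "\<dots> = sqrt (1 + \<xi> * c\<^sup>2) * N w"
    unfolding norm_m_eq_objective[OF u] q_def using xi by (simp add: power_mult_distrib ac_simps)
  finally show ?thesis .
qed

text \<open>Evaluating the objective at \<open>u = w / (1 + \<xi> c\<^sup>2)\<close> gives the bound.\<close>

lemma norm_m_le_norm:
  assumes "\<And>v. c * nrms v \<le> nrm v" and "c > 0"
  shows "sqrt (1 + \<xi> * c\<^sup>2) * N w \<le> nrm w"
proof -
  define k where "k = \<xi> * c\<^sup>2"
  have k: "k > 0" unfolding k_def using xi assms(2) by simp
  define s where "s = 1 / (1 + k)"
  have s: "0 \<le> 1 - s" "1 - s = k * s" "(1 + k) * s = 1"
    unfolding s_def using k by (simp_all add: field_simps)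
  have ns: "nrms w \<le> nrm w / c" using assms by (simp add: field_simps mult.commute)
  have "w - s *\<^sub>R w = (1 - s) *\<^sub>R w" by (simp add: algebra_simps)
  then have "(N w)\<^sup>2 \<le> s\<^sup>2 * (nrm w)\<^sup>2 + (1 - s)\<^sup>2 * (nrms w)\<^sup>2 / \<xi>"
    using moreau_le[of w "s *\<^sub>R w"] s(1) xi unfolding power2_norm_m objective_def
    by (simp add: is_norm_scaleR[OF nrm] is_norm_scaleR[OF nrms] power_mult_distrib)
  also have "\<dots> \<le> s\<^sup>2 * (nrm w)\<^sup>2 + (1 - s)\<^sup>2 * (nrm w / c)\<^sup>2 / \<xi>"
    using ns xi is_norm_nonneg[OF nrms, of w]
    by (intro add_left_mono divide_right_mono mult_left_mono power_mono) auto
  also have "\<dots> = s\<^sup>2 * (nrm w)\<^sup>2 + (1 - s)\<^sup>2 * ((nrm w)\<^sup>2 / k)"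
    unfolding k_def using xi assms(2) by (simp add: field_simps power2_eq_square)
  also have "\<dots> = (s\<^sup>2 + (1 - s)\<^sup>2 / k) * (nrm w)\<^sup>2" by (simp add: algebra_simps)
  also have "s\<^sup>2 + (1 - s)\<^sup>2 / k = (1 + k) * s * s"
    unfolding s(2) using k by (simp add: power2_eq_square algebra_simps)
  also have "\<dots> = s" unfolding s(3) by simp
  finally have "(1 + k) * (N w)\<^sup>2 \<le> (1 + k) * s * (nrm w)\<^sup>2"
    using k by (simp add: mult.assoc)
  then have "(1 + k) * (N w)\<^sup>2 \<le> (nrm w)\<^sup>2" unfolding s(3) by simp
  then have "sqrt ((1 + k) * (N w)\<^sup>2) \<le> sqrt ((nrm w)\<^sup>2)" by (rule real_sqrt_le_mono)
  then show ?thesis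
    using norm_m_nonneg[of w] is_norm_nonneg[OF nrm, of w] k unfolding k_def
    by (simp add: real_sqrt_mult)
qed

lemma moreau_le_quadratic:
  assumes smooth: "L_smooth_wrt nrms L (\<lambda>v. (nrms v)\<^sup>2 / 2)"
  obtains g C where "\<And>v. M (x + v) \<le> M x + g \<bullet> v + C * (norm v)\<^sup>2"
proof -
  obtain B where B: "\<And>v. nrms v \<le> B * norm v" using is_norm_le_norm[OF nrms] by blast
  obtain u where u: "M x = objective x u" using moreau_attained .
  define g where "g = grad (\<lambda>v. (nrms v)\<^sup>2 / 2) (x - u)"
  have "M (x + v) \<le> M x + (g /\<^sub>R \<xi>) \<bullet> v + (\<bar>L\<bar> * B\<^sup>2 / (2 * \<xi>)) * (norm v)\<^sup>2" for v
  proof -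
    have "(nrms (x + v - u))\<^sup>2 / 2 \<le> (nrms (x - u))\<^sup>2 / 2 + g \<bullet> v + L / 2 * (nrms v)\<^sup>2"
      using smooth[unfolded L_smooth_wrt_def, THEN conjunct2, rule_format, of "x + v - u" "x - u"]
      unfolding g_def by simp
    also have "L / 2 * (nrms v)\<^sup>2 \<le> \<bar>L\<bar> / 2 * (B * norm v)\<^sup>2"
      using B[of v] is_norm_nonneg[OF nrms, of v] by (intro mult_mono power_mono) auto
    finally have smooth_at: "(nrms (x + v - u))\<^sup>2 / 2
        \<le> (nrms (x - u))\<^sup>2 / 2 + g \<bullet> v + \<bar>L\<bar> / 2 * (B * norm v)\<^sup>2"
      by simp
    have "M (x + v) \<le> (nrm u)\<^sup>2 / 2 + ((nrms (x + v - u))\<^sup>2 / 2) / \<xi>"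
      using moreau_le[of "x + v" u] unfolding objective_def by simp
    also have "\<dots> \<le> (nrm u)\<^sup>2 / 2
        + ((nrms (x - u))\<^sup>2 / 2 + g \<bullet> v + \<bar>L\<bar> / 2 * (B * norm v)\<^sup>2) / \<xi>"
      using smooth_at xi by (intro add_left_mono divide_right_mono) auto
    also have "\<dots> = M x + (g /\<^sub>R \<xi>) \<bullet> v + (\<bar>L\<bar> * B\<^sup>2 / (2 * \<xi>)) * (norm v)\<^sup>2"
      unfolding u objective_def using xi by (simp add: field_simps power_mult_distrib)
    finally show ?thesis .
  qed
  then show thesis by (rule that)
qed

lemma has_derivative_power2_norm_m:
  assumes "L_smooth_wrt nrms L (\<lambda>v. (nrms v)\<^sup>2 / 2)"
  obtains D where "((\<lambda>v. (N v)\<^sup>2) has_derivative (\<lambda>v. D \<bullet> v)) (at x)"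
proof -
  obtain g C where "\<And>v. M (x + v) \<le> M x + g \<bullet> v + C * (norm v)\<^sup>2"
    using moreau_le_quadratic[OF assms] by blast
  with moreau_midpoint_convex have "(M has_derivative (\<lambda>v. g \<bullet> v)) (at x)"
    by (rule has_derivative_of_midpoint_convex_quadratic_upper)
  then have "((\<lambda>v. 2 * M v) has_derivative (\<lambda>v. 2 * (g \<bullet> v))) (at x)"
    by (rule has_derivative_mult_right)
  then have "((\<lambda>v. (N v)\<^sup>2) has_derivative (\<lambda>v. (2 *\<^sub>R g) \<bullet> v)) (at x)"
    unfolding power2_norm_m by simp
  then show thesis by (rule that)
qed

end

theorem lemma4:
  fixes nrm nrms :: "real ^ 'd \<Rightarrow> real"
    and h :: "real ^ 'd \<Rightarrow> real ^ 'd"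
    and \<kappa> \<xi> L l_cs u_cs :: real
    and wstar w :: "real ^ 'd"
  assumes nrm: "is_norm nrm"
    and nrms: "is_norm nrms"
    and smooth: "L_smooth_wrt nrms L (\<lambda>v. (nrms v)\<^sup>2 / 2)"
    and xi: "\<xi> > 0"
    and kappa: "0 \<le> \<kappa>" "\<kappa> < 1"
    and contr: "\<forall>v v'. nrm (h v - h v') \<le> \<kappa> * nrm (v - v')"
    and fixpt: "h wstar = wstar"
    and cs: "l_cs > 0" "u_cs > 0" "\<forall>v. l_cs * nrms v \<le> nrm v \<and> nrm v \<le> u_cs * nrms v"
  shows "grad (\<lambda>v. (norm_m nrm nrms \<xi> v)\<^sup>2) (w - wstar) \<bullet> (h w - w)
           \<le> - 2 * (1 - (sqrt (1 + \<xi> * u_cs\<^sup>2) / sqrt (1 + \<xi> * l_cs\<^sup>2)) * \<kappa>)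
               * (norm_m nrm nrms \<xi> (w - wstar))\<^sup>2"
proof -
  interpret moreau_envelope nrm nrms \<xi> using nrm nrms xi by unfold_locales
  define x y where "x = w - wstar" and "y = h w - wstar"
  define l_cm u_cm where "l_cm = sqrt (1 + \<xi> * l_cs\<^sup>2)" and "u_cm = sqrt (1 + \<xi> * u_cs\<^sup>2)"
  obtain D where D: "((\<lambda>v. (N v)\<^sup>2) has_derivative (\<lambda>v. D \<bullet> v)) (at x)"
    using has_derivative_power2_norm_m[OF smooth] by blast
  have "l_cm * N y \<le> nrm y" unfolding l_cm_def using cs by (intro norm_m_le_norm) auto
  also have "nrm y \<le> \<kappa> * nrm x" unfolding x_def y_def using contr fixpt by metis
  also have "\<dots> \<le> \<kappa> * (u_cm * N x)"
    unfolding u_cm_def using cs kappa by (intro mult_left_mono norm_le_norm_m) auto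
  finally have "l_cm * N y \<le> \<kappa> * (u_cm * N x)" .
  moreover have "l_cm > 0" unfolding l_cm_def using xi by (simp add: add_pos_nonneg)
  ultimately have Ny: "N y \<le> (u_cm / l_cm) * \<kappa> * N x" by (simp add: field_simps)
  have "D \<bullet> (h w - w) = D \<bullet> y - D \<bullet> x" unfolding x_def y_def by (simp add: inner_diff_right)
  also have "\<dots> \<le> 2 * N x * N y - 2 * (N x)\<^sup>2"
    using has_derivative_power2_norm_inner_le[OF is_norm_norm_m D, of y]
      has_derivative_power2_norm_inner_self[OF is_norm_norm_m D] by simp
  also have "\<dots> \<le> 2 * N x * ((u_cm / l_cm) * \<kappa> * N x) - 2 * (N x)\<^sup>2"
    using Ny norm_m_nonneg[of x] by (intro diff_right_mono mult_left_mono) simp_all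
  also have "\<dots> = - 2 * (1 - (u_cm / l_cm) * \<kappa>) * (N x)\<^sup>2"
    by (simp add: power2_eq_square algebra_simps)
  finally show ?thesis using grad_eqI[OF D] unfolding x_def l_cm_def u_cm_def by simp
qed

end
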